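(* Let $\mathrm{SU}(2)\subset\mathrm{SO}(4)\times\{1\}$ act on $\Lambda^2_-S^4$. Every point is mapped into the fiber over some ${}^t(x_1,0,0,0,x_5)$ with $x_1\ge0$. For $p_0$ in that fiber, the orbit $\mathrm{SU}(2)\cdot p_0$ is diffeomorphic to $S^3$ if $x_5\ne\pm1$; to $S^2$ if $x_5=1$ and $p_0\ne0$; and to a point if $x_5=1$ and $p_0=0$, or if $x_5=-1$.
   Context: $S^4\subset\mathbb R^5$ is the unit sphere, $\Lambda^2_-S^4$ the bundle of anti-self-dual 2-forms (round metric); $\mathrm{SO}(5)$ acts on $\Lambda^2_-S^4$ by lifting its linear action on $S^4$ to 2-forms ($g\cdot\omega=(g^{-1})^*\omega$). $\mathrm{SU}(2)$ acts $\mathbb C$-linearly on $\mathbb C^2\cong\mathbb R^4$ via $(z_1,z_2)=(x_1+ix_2,x_3+ix_4)$ and fixes $x_5$; $p_0=0$ means $p_0$ lies in the zero section. *)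

theory Defs
  imports "HOL-Analysis.Analysis"
begin

inductive_set iter_partials ::
  "('a::euclidean_space \<Rightarrow> 'b::real_normed_vector) \<Rightarrow> ('a \<Rightarrow> 'b) set"
  for f where
  base: "f \<in> iter_partials f"
| step: "g \<in> iter_partials f \<Longrightarrow> b \<in> Basis \<Longrightarrow>
          (\<lambda>x. frechet_derivative g (at x) b) \<in> iter_partials f"

definition smooth_on :: "'a::euclidean_space set \<Rightarrow> ('a \<Rightarrow> 'b::real_normed_vector) \<Rightarrow> bool" where
  "smooth_on U f \<longleftrightarrow> open U \<and> (\<forall>g \<in> iter_partials f. g differentiable_on U)"

definition smooth_map_on :: "'a::euclidean_space set \<Rightarrow> ('a \<Rightarrow> 'b::real_normed_vector) \<Rightarrow> bool" where
  "smooth_map_on S f \<longleftrightarrow>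
     (\<forall>x\<in>S. \<exists>U g. open U \<and> x \<in> U \<and> smooth_on U g \<and> (\<forall>y\<in>S \<inter> U. g y = f y))"

definition diffeomorphic :: "'a::euclidean_space set \<Rightarrow> 'b::euclidean_space set \<Rightarrow> bool" where
  "diffeomorphic S T \<longleftrightarrow>
     (\<exists>f g. smooth_map_on S f \<and> smooth_map_on T g \<and> f ` S \<subseteq> T \<and> g ` T \<subseteq> S \<and>
            (\<forall>x\<in>S. g (f x) = x) \<and> (\<forall>y\<in>T. f (g y) = y))"

text \<open>A 2-form at x in S^4 is a skew 5x5 matrix A (omega(u,v) = u^T A v) with A x = 0,
  i.e. a 2-form on the tangent space x-perp.  Components are x$1,...,x$5.\<close>

definition hodge4 :: "real^5 \<Rightarrow> real^5^5 \<Rightarrow> real^5^5" where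
  "hodge4 x A = (\<chi> i j. (1/2) * (\<Sum>k\<in>UNIV. \<Sum>l\<in>UNIV. A$k$l *
      det (vector [axis i 1, axis j 1, axis k 1, axis l 1, x] :: real^5^5)))"

definition ASD_bundle :: "((real^5) \<times> (real^5^5)) set" where
  "ASD_bundle = {(x, A). norm x = 1 \<and> transpose A = - A \<and> A *v x = 0 \<and> hodge4 x A = - A}"

text \<open>Action of SO(5) (and subgroups) on the bundle: g.(x,A) = (g x, g A g^T),
  which is (g^{-1})^* on 2-forms for orthogonal g.\<close>
definition bundle_act :: "real^5^5 \<Rightarrow> (real^5) \<times> (real^5^5) \<Rightarrow> (real^5) \<times> (real^5^5)" where
  "bundle_act g p = (g *v fst p, g ** snd p ** transpose g)"

definition SU2 :: "(complex^2^2) set" where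
  "SU2 = {U. U ** (\<chi> i j. cnj (U $ j $ i)) = mat 1 \<and> det U = 1}"

text \<open>SU(2) acting on C^2 = R^4 via (z1,z2) = (x1 + i x2, x3 + i x4), fixing x5.\<close>
definition su2_apply :: "complex^2^2 \<Rightarrow> real^5 \<Rightarrow> real^5" where
  "su2_apply U x =
    (let w = U *v (vector [Complex (x$1) (x$2), Complex (x$3) (x$4)] :: complex^2)
     in vector [Re (w$1), Im (w$1), Re (w$2), Im (w$2), x$5])"

definition su2_mat :: "complex^2^2 \<Rightarrow> real^5^5" where
  "su2_mat U = matrix (su2_apply U)"

definition su2_orbit :: "(real^5) \<times> (real^5^5) \<Rightarrow> ((real^5) \<times> (real^5^5)) set" where
  "su2_orbit p = (\<lambda>U. bundle_act (su2_mat U) p) ` SU2"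

end

theory Submission
  imports Defs
begin

text \<open>Through \<open>su2_mat\<close>, SU(2) acts on \<open>\<real>\<^sup>5 = \<bbbH> \<oplus> \<real>\<close> by left multiplication with the unit
  quaternions, so every orbit is the image of \<open>S\<^sup>3\<close> under a map that is polynomial of degree two
  in the quaternion, hence smooth.  Left multiplication is transitive on the spheres of \<open>\<bbbH>\<close>, which
  gives the normal form of the base point.  Away from the poles \<open>\<plusminus>e\<^sub>5\<close> the base point alone moves
  freely, and reading off its quaternion part is a linear inverse of the orbit map, so the orbit
  is a 3-sphere.  Over the poles the fiber is three-dimensional: over \<open>e\<^sub>5\<close> the conjugation action
  is the rotation action \<open>SU(2) \<rightarrow> SO(3)\<close>, transitive on spheres, so a nonzero form sweeps out a
  2-sphere; over \<open>-e\<^sub>5\<close> the action is trivial.\<close>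

lemma exhaust_5:
  fixes x :: 5
  shows "x = 1 \<or> x = 2 \<or> x = 3 \<or> x = 4 \<or> x = 5"
proof (induct x)
  case (of_int z)
  then have "z = 0 \<or> z = 1 \<or> z = 2 \<or> z = 3 \<or> z = 4" by fastforce
  then show ?case by auto
qed

lemma forall_5: "(\<forall>i::5. P i) \<longleftrightarrow> P 1 \<and> P 2 \<and> P 3 \<and> P 4 \<and> P 5"
  by (metis exhaust_5)

lemma sum_5: "sum f (UNIV::5 set) = f 1 + f 2 + f 3 + f 4 + f 5"
proof -
  have UNIV_5: "UNIV = {1, 2, 3, 4, 5::5}" using exhaust_5 by auto
  show ?thesis unfolding UNIV_5 by (simp add: ac_simps)
qed

lemma vector_4 [simp]:
  "(vector [x1,x2,x3,x4] :: ('a::zero)^4) $ 1 = x1"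
  "(vector [x1,x2,x3,x4] :: ('a::zero)^4) $ 2 = x2"
  "(vector [x1,x2,x3,x4] :: ('a::zero)^4) $ 3 = x3"
  "(vector [x1,x2,x3,x4] :: ('a::zero)^4) $ 4 = x4"
  unfolding vector_def by simp_all

lemma vector_5 [simp]:
  "(vector [x1,x2,x3,x4,x5] :: ('a::zero)^5) $ 1 = x1"
  "(vector [x1,x2,x3,x4,x5] :: ('a::zero)^5) $ 2 = x2"
  "(vector [x1,x2,x3,x4,x5] :: ('a::zero)^5) $ 3 = x3"
  "(vector [x1,x2,x3,x4,x5] :: ('a::zero)^5) $ 4 = x4"
  "(vector [x1,x2,x3,x4,x5] :: ('a::zero)^5) $ 5 = x5"
  unfolding vector_def by simp_all

lemma norm_vec3_eq_1: "norm (q::real^3) = 1 \<longleftrightarrow> (q$1)\<^sup>2 + (q$2)\<^sup>2 + (q$3)\<^sup>2 = 1"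
  by (simp add: norm_eq_1 inner_vec_def sum_3 power2_eq_square)

lemma norm_vec4_eq_1: "norm (q::real^4) = 1 \<longleftrightarrow> (q$1)\<^sup>2 + (q$2)\<^sup>2 + (q$3)\<^sup>2 + (q$4)\<^sup>2 = 1"
  by (simp add: norm_eq_1 inner_vec_def sum_4 power2_eq_square)

section \<open>Quadratic maps are smooth\<close>

definition quadratic_map :: "('a::euclidean_space \<Rightarrow> 'b::real_normed_vector) \<Rightarrow> bool" where
  "quadratic_map f \<longleftrightarrow> (\<exists>c L B. linear L \<and> bilinear B \<and> f = (\<lambda>x. c + L x + B x x))"

lemma quadratic_map_has_derivative:
  fixes L :: "'a::euclidean_space \<Rightarrow> 'b::real_normed_vector"
  assumes "linear L" "bilinear B"
  shows "((\<lambda>x. c + L x + B x x) has_derivative (\<lambda>h. L h + (B x h + B h x))) (at x)"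
proof -
  have "bounded_bilinear B" using assms(2) bilinear_conv_bounded_bilinear by blast
  then have "((\<lambda>x. B x x) has_derivative (\<lambda>h. B x h + B h x)) (at x)"
    using bounded_bilinear.FDERIV[of B "\<lambda>x. x" "\<lambda>h. h" x UNIV "\<lambda>x. x" "\<lambda>h. h"]
    by (simp add: has_derivative_ident)
  moreover have "(L has_derivative L) (at x)"
    using assms(1) linear_conv_bounded_linear bounded_linear_imp_has_derivative by blast
  ultimately show ?thesis
    using has_derivative_add[OF has_derivative_add[OF has_derivative_const[of c]]] by simp
qed

lemma quadratic_map_iter_partials:
  assumes "g \<in> iter_partials f" "quadratic_map f"
  shows "quadratic_map g"
  using assms
proof (induction rule: iter_partials.induct)
  case base
  then show ?case .
next
  case (step g b)
  then obtain c L B where g: "linear L" "bilinear B" "g = (\<lambda>x. c + L x + B x x)"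
    unfolding quadratic_map_def by blast
  have "frechet_derivative g (at x) = (\<lambda>h. L h + (B x h + B h x))" for x
    using quadratic_map_has_derivative[OF g(1,2), of c x] g(3) frechet_derivative_at by metis
  moreover have "linear (\<lambda>x. B x b + B b x)"
    using g(2) unfolding bilinear_def by (intro linear_compose_add) auto
  moreover have "bilinear (\<lambda>x y. 0 :: 'b)"
    by (simp add: bilinear_def linear_zero)
  ultimately show ?case
    unfolding quadratic_map_def
    by (intro exI[of _ "L b"] exI[of _ "\<lambda>x. B x b + B b x"] exI[of _ "\<lambda>x y. 0"]) auto
qed

lemma smooth_on_quadratic_map: "quadratic_map f \<Longrightarrow> smooth_on UNIV f"
  unfolding smooth_on_def
proof (intro conjI ballI open_UNIV)
  fix g assume "quadratic_map f" "g \<in> iter_partials f"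
  then obtain c L B where g: "linear L" "bilinear B" "g = (\<lambda>x. c + L x + B x x)"
    using quadratic_map_iter_partials unfolding quadratic_map_def by blast
  show "g differentiable_on UNIV"
    unfolding differentiable_on_def differentiable_def g(3)
    using quadratic_map_has_derivative[OF g(1,2)] has_derivative_at_withinI by blast
qed

lemma smooth_map_on_quadratic_map: "quadratic_map f \<Longrightarrow> smooth_map_on S f"
  unfolding smooth_map_on_def using smooth_on_quadratic_map by blast

lemma diffeomorphic_image_quadratic_map:
  assumes "quadratic_map f" "quadratic_map g" "\<forall>y\<in>S. f (g y) = y"
  shows "diffeomorphic (g ` S) S"
  unfolding diffeomorphic_def
  by (intro exI[of _ f] exI[of _ g]) (use assms in \<open>auto simp: smooth_map_on_quadratic_map\<close>)

lemma quadratic_map_affine: "linear L \<Longrightarrow> quadratic_map (\<lambda>x. c + L x)"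
  unfolding quadratic_map_def
  by (intro exI[of _ c] exI[of _ L] exI[of _ "\<lambda>x y. 0"]) (auto simp: bilinear_def linear_zero)

lemma quadratic_map_linear: "linear L \<Longrightarrow> quadratic_map L"
  using quadratic_map_affine[of L 0] by simp

lemma quadratic_map_const: "quadratic_map (\<lambda>x. c)"
  using quadratic_map_affine[OF linear_zero, of c] by simp

lemma quadratic_map_bilinear_affine:
  assumes "bilinear B" "linear L" "linear M"
  shows "quadratic_map (\<lambda>x. B (c + L x) (d + M x))"
proof -
  have B1: "linear (B u)" for u
    using assms(1) unfolding bilinear_def by auto
  have B2: "linear (\<lambda>u. B u v)" for v
    using assms(1) unfolding bilinear_def by auto
  have "linear (\<lambda>x. B c (M x) + B (L x) d)"
    using linear_compose[OF assms(3) B1] linear_compose[OF assms(2) B2]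
    by (intro linear_compose_add) (simp_all add: o_def)
  moreover have "bilinear (\<lambda>x y. B (L x) (M y))"
    using linear_compose[OF assms(3) B1] linear_compose[OF assms(2) B2]
    unfolding bilinear_def by (simp add: o_def)
  moreover have "B (c + L x) (d + M x) = B c d + (B c (M x) + B (L x) d) + B (L x) (M x)" for x
    using assms(1) by (simp add: bilinear_ladd bilinear_radd algebra_simps)
  ultimately show ?thesis
    unfolding quadratic_map_def
    by (intro exI[of _ "B c d"] exI[of _ "\<lambda>x. B c (M x) + B (L x) d"] exI[of _ "\<lambda>x y. B (L x) (M y)"])
      auto
qed

lemma quadratic_map_Pair:
  assumes "quadratic_map f" "quadratic_map g"
  shows "quadratic_map (\<lambda>x. (f x, g x))"
proof -
  obtain c1 L1 B1 where f: "linear L1" "bilinear B1" "f = (\<lambda>x. c1 + L1 x + B1 x x)"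
    using assms(1) unfolding quadratic_map_def by blast
  obtain c2 L2 B2 where g: "linear L2" "bilinear B2" "g = (\<lambda>x. c2 + L2 x + B2 x x)"
    using assms(2) unfolding quadratic_map_def by blast
  have "linear (\<lambda>x. (L1 x, L2 x))"
    using f(1) g(1) by (intro linearI) (simp_all add: linear_add linear_scale)
  moreover have "bilinear (\<lambda>x y. (B1 x y, B2 x y))"
    unfolding bilinear_def
    by (auto intro!: linearI simp: bilinear_ladd[OF f(2)] bilinear_ladd[OF g(2)]
        bilinear_radd[OF f(2)] bilinear_radd[OF g(2)] bilinear_lmul[OF f(2)] bilinear_lmul[OF g(2)]
        bilinear_rmul[OF f(2)] bilinear_rmul[OF g(2)])
  ultimately show ?thesis
    unfolding quadratic_map_def using f(3) g(3)
    by (intro exI[of _ "(c1, c2)"] exI[of _ "\<lambda>x. (L1 x, L2 x)"] exI[of _ "\<lambda>x y. (B1 x y, B2 x y)"])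
      auto
qed


section \<open>SU(2) as the unit quaternions\<close>

definition su2_matrix :: "complex \<Rightarrow> complex \<Rightarrow> complex^2^2" where
  "su2_matrix a b = vector [vector [a, - cnj b], vector [b, cnj a]]"

lemma su2_matrix_nth [simp]:
  "su2_matrix a b $ 1 $ 1 = a" "su2_matrix a b $ 1 $ 2 = - cnj b"
  "su2_matrix a b $ 2 $ 1 = b" "su2_matrix a b $ 2 $ 2 = cnj a"
  by (simp_all add: su2_matrix_def)

lemma unitary_det_1_entries:
  fixes a b c d :: complex
  assumes rows: "a * cnj a + c * cnj c = 1" "a * cnj b + c * cnj d = 0" "b * cnj b + d * cnj d = 1"
    and det: "a * d - c * b = 1"
  shows "d = cnj a" "c = - cnj b"
proof -
  have rows': "cnj a * b + cnj c * d = 0"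
    using arg_cong[OF rows(2), of cnj] by (simp add: mult.commute)
  have "cnj a = cnj a * (a * d - c * b)" using det by simp
  also have "\<dots> = d * (a * cnj a + c * cnj c) - c * (cnj a * b + cnj c * d)"
    by (simp add: algebra_simps)
  finally show "d = cnj a" using rows(1) rows' by simp
  have "- cnj b = - cnj b * (a * d - c * b)" using det by simp
  also have "\<dots> = c * (b * cnj b + d * cnj d) - d * (a * cnj b + c * cnj d)"
    by (simp add: algebra_simps)
  finally show "c = - cnj b" using rows(2,3) by simp
qed

lemma cmod_sum_squares_eq_1: "(cmod a)\<^sup>2 + (cmod b)\<^sup>2 = 1 \<longleftrightarrow> a * cnj a + b * cnj b = 1"
proof -
  have "a * cnj a + b * cnj b = complex_of_real ((cmod a)\<^sup>2 + (cmod b)\<^sup>2)"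
    by (simp only: of_real_add complex_norm_square)
  then show ?thesis by (metis of_real_eq_1_iff)
qed

lemma SU2_eq_su2_matrix:
  assumes "U \<in> SU2"
  shows "U = su2_matrix (U$1$1) (U$2$1)" "(cmod (U$1$1))\<^sup>2 + (cmod (U$2$1))\<^sup>2 = 1"
proof -
  have unitary: "U ** (\<chi> i j. cnj (U $ j $ i)) = mat 1" and det: "det U = 1"
    using assms by (auto simp: SU2_def)
  have entry: "(\<Sum>k\<in>UNIV. U$i$k * cnj (U$j$k)) = (if i = j then 1 else 0)" for i j
    using arg_cong[OF unitary, of "\<lambda>M. M$i$j"] by (simp add: matrix_matrix_mult_def mat_def)
  have rows: "U$1$1 * cnj (U$1$1) + U$1$2 * cnj (U$1$2) = 1"
    "U$1$1 * cnj (U$2$1) + U$1$2 * cnj (U$2$2) = 0"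
    "U$2$1 * cnj (U$2$1) + U$2$2 * cnj (U$2$2) = 1"
    using entry[of 1 1] entry[of 1 2] entry[of 2 2] by (simp_all add: sum_2)
  note entries = unitary_det_1_entries[OF rows det[unfolded det_2]]
  show "U = su2_matrix (U$1$1) (U$2$1)"
    using entries by (simp add: vec_eq_iff forall_2)
  show "(cmod (U$1$1))\<^sup>2 + (cmod (U$2$1))\<^sup>2 = 1"
    unfolding cmod_sum_squares_eq_1 using rows(1) entries(2) by (simp add: mult.commute)
qed

lemma su2_matrix_in_SU2:
  assumes "(cmod a)\<^sup>2 + (cmod b)\<^sup>2 = 1"
  shows "su2_matrix a b \<in> SU2"
proof -
  from assms have "a * cnj a + b * cnj b = 1"
    by (simp add: cmod_sum_squares_eq_1)
  then show ?thesis
    unfolding SU2_def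
    by (simp add: vec_eq_iff forall_2 matrix_matrix_mult_def sum_2 mat_def det_2 algebra_simps)
qed

text \<open>Left multiplication by the quaternion \<open>q$1 + q$2 i + q$3 j + q$4 k\<close> on the first four
  coordinates, and the identity on the fifth.\<close>
definition quat_matrix :: "real^4 \<Rightarrow> real^5^5" where
  "quat_matrix q = vector [vector [q$1, -q$2, -q$3, -q$4, 0], vector [q$2, q$1, q$4, -q$3, 0],
     vector [q$3, -q$4, q$1, q$2, 0], vector [q$4, q$3, -q$2, q$1, 0], vector [0, 0, 0, 0, 1]]"

lemma su2_mat_su2_matrix:
  "su2_mat (su2_matrix (Complex (q$1) (q$2)) (Complex (q$3) (q$4))) = quat_matrix q"
proof -
  have "su2_apply (su2_matrix (Complex (q$1) (q$2)) (Complex (q$3) (q$4))) = (\<lambda>x. quat_matrix q *v x)"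
    by (rule ext) (simp add: su2_apply_def Let_def vec_eq_iff forall_5 matrix_vector_mult_def
        sum_2 sum_5 quat_matrix_def algebra_simps)
  then show ?thesis by (simp add: su2_mat_def)
qed

lemma su2_mat_image_SU2: "su2_mat ` SU2 = quat_matrix ` sphere 0 1"
proof
  show "su2_mat ` SU2 \<subseteq> quat_matrix ` sphere 0 1"
  proof
    fix M assume "M \<in> su2_mat ` SU2"
    then obtain U where U: "U \<in> SU2" "M = su2_mat U" by blast
    define q where "q = (vector [Re (U$1$1), Im (U$1$1), Re (U$2$1), Im (U$2$1)] :: real^4)"
    have "norm q = 1"
      using SU2_eq_su2_matrix(2)[OF U(1)] by (simp add: q_def norm_vec4_eq_1 cmod_power2 add.assoc)
    moreover have "M = quat_matrix q"
      using su2_mat_su2_matrix[of q] SU2_eq_su2_matrix(1)[OF U(1)] by (simp add: U(2) q_def)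
    ultimately show "M \<in> quat_matrix ` sphere 0 1" by simp
  qed
  show "quat_matrix ` sphere 0 1 \<subseteq> su2_mat ` SU2"
  proof
    fix M assume "M \<in> quat_matrix ` sphere 0 1"
    then obtain q where q: "norm q = 1" "M = quat_matrix q" by auto
    let ?U = "su2_matrix (Complex (q$1) (q$2)) (Complex (q$3) (q$4))"
    have "?U \<in> SU2"
      using q(1) by (intro su2_matrix_in_SU2) (simp add: norm_vec4_eq_1 cmod_power2 add.assoc)
    then show "M \<in> su2_mat ` SU2"
      using su2_mat_su2_matrix[of q] q(2) by (metis image_eqI)
  qed
qed

lemma su2_orbit_eq_image_sphere:
  "su2_orbit p = (\<lambda>q. bundle_act (quat_matrix q) p) ` sphere 0 1"
proof -
  have "su2_orbit p = (\<lambda>M. bundle_act M p) ` su2_mat ` SU2"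
    by (simp add: su2_orbit_def image_image)
  then show ?thesis by (simp add: su2_mat_image_SU2 image_image)
qed

lemma bilinear_matrix_conj:
  "bilinear (\<lambda>(X::real^'n^'m) (Y::real^'n^'m). X ** (A::real^'n^'n) ** transpose Y)"
  unfolding bilinear_def
  by (auto intro!: linearI simp: vec_eq_iff matrix_matrix_mult_def transpose_def
      sum.distrib sum_distrib_left algebra_simps)

lemma quadratic_map_orbit: "quadratic_map (\<lambda>q. bundle_act (quat_matrix q) (x, A))"
proof -
  define L where "L q = quat_matrix q - quat_matrix 0" for q
  have L: "linear L"
    unfolding L_def by (rule linearI) (simp_all add: vec_eq_iff forall_5 quat_matrix_def)
  have "linear (\<lambda>q. L q *v x)"
    using L by (intro linearI) (simp_all add: linear_add linear_scale matrix_vector_mult_add_rdistrib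
        scaleR_matrix_vector_assoc)
  then have "quadratic_map (\<lambda>q. quat_matrix 0 *v x + L q *v x)"
    by (rule quadratic_map_affine)
  moreover have "quadratic_map (\<lambda>q. (quat_matrix 0 + L q) ** A ** transpose (quat_matrix 0 + L q))"
    by (rule quadratic_map_bilinear_affine[OF bilinear_matrix_conj L L])
  ultimately show ?thesis
    unfolding bundle_act_def L_def
    by (simp add: quadratic_map_Pair matrix_vector_mult_add_rdistrib[symmetric])
qed

lemma su2_normal_form:
  "\<exists>U\<in>SU2. \<exists>x1 x5. x1 \<ge> 0 \<and> su2_mat U *v x = vector [x1, 0, 0, 0, x5]"
proof -
  define r where "r = sqrt ((x$1)\<^sup>2 + (x$2)\<^sup>2 + (x$3)\<^sup>2 + (x$4)\<^sup>2)"
  have r: "r\<^sup>2 = (x$1)\<^sup>2 + (x$2)\<^sup>2 + (x$3)\<^sup>2 + (x$4)\<^sup>2" "r \<ge> 0"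
    by (simp_all add: r_def)
  have "\<exists>q. norm q = 1 \<and> quat_matrix q *v x = vector [r, 0, 0, 0, x$5]"
  proof (cases "r = 0")
    case True
    then have "x$1 = 0 \<and> x$2 = 0 \<and> x$3 = 0 \<and> x$4 = 0"
      using r(1) by (simp add: sum_power2_eq_zero_iff add_nonneg_eq_0_iff)
    then show ?thesis
      using True
      by (intro exI[of _ "vector [1, 0, 0, 0]"])
        (simp add: norm_vec4_eq_1 vec_eq_iff forall_5 matrix_vector_mult_def sum_5 quat_matrix_def)
  next
    case False
    then have "r > 0" "r\<^sup>2 \<noteq> 0" using r(2) by simp_all
    define q where "q = (vector [x$1 / r, - x$2 / r, - x$3 / r, - x$4 / r] :: real^4)"
    have "(q$1)\<^sup>2 + (q$2)\<^sup>2 + (q$3)\<^sup>2 + (q$4)\<^sup>2 = ((x$1)\<^sup>2 + (x$2)\<^sup>2 + (x$3)\<^sup>2 + (x$4)\<^sup>2) / r\<^sup>2"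
      by (simp add: q_def power_divide add_divide_distrib)
    then have "norm q = 1"
      using \<open>r\<^sup>2 \<noteq> 0\<close> by (simp add: norm_vec4_eq_1 flip: r(1))
    moreover have "quat_matrix q *v x = vector [r, 0, 0, 0, x$5]"
      using \<open>r > 0\<close> r(1)
      by (simp add: q_def vec_eq_iff forall_5 matrix_vector_mult_def sum_5 quat_matrix_def
          field_simps power2_eq_square)
    ultimately show ?thesis by blast
  qed
  then obtain q where "q \<in> sphere 0 1" "quat_matrix q *v x = vector [r, 0, 0, 0, x$5]" by auto
  moreover obtain U where "U \<in> SU2" "su2_mat U = quat_matrix q"
  proof -
    have "quat_matrix q \<in> su2_mat ` SU2"
      using su2_mat_image_SU2 \<open>q \<in> sphere 0 1\<close> by simp
    then show thesis using that by auto
  qed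
  ultimately show ?thesis using r(2) by metis
qed

lemma su2_orbit_diffeomorphic_S3:
  assumes "x1 > 0"
  shows "diffeomorphic (su2_orbit (vector [x1, 0, 0, 0, x5], A)) (sphere (0::real^4) 1)"
proof -
  define f where "f p = (1 / x1) *\<^sub>R (vector [fst p $ 1, fst p $ 2, fst p $ 3, fst p $ 4] :: real^4)"
    for p :: "(real^5) \<times> (real^5^5)"
  have "linear f"
    unfolding f_def by (rule linearI) (simp_all add: vec_eq_iff forall_4 algebra_simps add_divide_distrib)
  moreover have "\<forall>q\<in>sphere 0 1. f (bundle_act (quat_matrix q) (vector [x1, 0, 0, 0, x5], A)) = q"
    using assms
    by (simp add: f_def bundle_act_def vec_eq_iff forall_4 matrix_vector_mult_def sum_5 quat_matrix_def)
  ultimately show ?thesis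
    unfolding su2_orbit_eq_image_sphere
    by (intro diffeomorphic_image_quadratic_map quadratic_map_linear quadratic_map_orbit)
qed


section \<open>The fibers over the poles\<close>

abbreviation det_axes :: "5 \<Rightarrow> 5 \<Rightarrow> 5 \<Rightarrow> 5 \<Rightarrow> 5 \<Rightarrow> real" where
  "det_axes i j k l m \<equiv> det (vector [axis i 1, axis j 1, axis k 1, axis l 1, axis m 1] :: real^5^5)"

lemma det_axes_eq_0:
  "i = j \<Longrightarrow> det_axes i j k l m = 0" "i = k \<Longrightarrow> det_axes i j k l m = 0"
  "i = l \<Longrightarrow> det_axes i j k l m = 0" "i = m \<Longrightarrow> det_axes i j k l m = 0"
  "j = k \<Longrightarrow> det_axes i j k l m = 0" "j = l \<Longrightarrow> det_axes i j k l m = 0"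
  "j = m \<Longrightarrow> det_axes i j k l m = 0" "k = l \<Longrightarrow> det_axes i j k l m = 0"
  "k = m \<Longrightarrow> det_axes i j k l m = 0" "l = m \<Longrightarrow> det_axes i j k l m = 0"
  by (rule det_identical_rows[of 1 2] det_identical_rows[of 1 3] det_identical_rows[of 1 4]
      det_identical_rows[of 1 5] det_identical_rows[of 2 3] det_identical_rows[of 2 4]
      det_identical_rows[of 2 5] det_identical_rows[of 3 4] det_identical_rows[of 3 5]
      det_identical_rows[of 4 5]; simp add: row_def vec_eq_iff)+

lemma det_axes_id: "det_axes 1 2 3 4 5 = 1"
proof -
  have "(vector [axis 1 1, axis 2 1, axis 3 1, axis 4 1, axis 5 1] :: real^5^5) = mat 1"
    by (simp add: vec_eq_iff forall_5 mat_def axis_def)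
  then show ?thesis by simp
qed

lemma det_swap_rows:
  fixes A :: "real^'n^'n"
  assumes "a \<noteq> b"
  shows "det (\<chi> i. A $ Transposition.transpose a b i) = - det A"
  using det_permute_rows[OF permutes_swap_id[of a UNIV b], of A] assms by (simp add: sign_swap_id)

lemma det_axes_swap:
  assumes "a \<noteq> b"
    and "M = (\<chi> i. (vector [axis i1 1, axis i2 1, axis i3 1, axis i4 1, axis i5 1] :: real^5^5)
                     $ Transposition.transpose a b i)"
  shows "det M = - det_axes i1 i2 i3 i4 i5"
  using det_swap_rows[OF assms(1)] assms(2) by simp

lemma det_axes_values:
  "det_axes 1 2 4 3 5 = -1" "det_axes 1 3 2 4 5 = -1" "det_axes 1 3 4 2 5 = 1"
  "det_axes 1 4 3 2 5 = -1" "det_axes 1 4 2 3 5 = 1"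
proof -
  have "det_axes 1 2 4 3 5 = - det_axes 1 2 3 4 5"
    "det_axes 1 3 2 4 5 = - det_axes 1 2 3 4 5"
    "det_axes 1 3 4 2 5 = - det_axes 1 3 2 4 5"
    "det_axes 1 4 3 2 5 = - det_axes 1 2 3 4 5"
    "det_axes 1 4 2 3 5 = - det_axes 1 4 3 2 5"
    by (rule det_axes_swap[of 3 4] det_axes_swap[of 2 3] det_axes_swap[of 3 4] det_axes_swap[of 2 4]
        det_axes_swap[of 3 4]; simp add: vec_eq_iff forall_5 Transposition.transpose_def)+
  then show "det_axes 1 2 4 3 5 = -1" "det_axes 1 3 2 4 5 = -1" "det_axes 1 3 4 2 5 = 1"
    "det_axes 1 4 3 2 5 = -1" "det_axes 1 4 2 3 5 = 1"
    using det_axes_id by simp_all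
qed

lemma det_scale_last_row:
  "det (vector [a, b, c, d, s *s e] :: real^5^5) = s * det (vector [a, b, c, d, e] :: real^5^5)"
proof -
  have scaled: "(vector [a, b, c, d, s *s e] :: real^5^5)
      = (\<chi> i. if i = 5 then s *s e else (vector [a, b, c, d, e] :: real^5^5) $ i)"
    by (simp add: vec_eq_iff forall_5)
  have unscaled: "(vector [a, b, c, d, e] :: real^5^5)
      = (\<chi> i. if i = 5 then e else (vector [a, b, c, d, e] :: real^5^5) $ i)"
    by (simp add: vec_eq_iff forall_5)
  show ?thesis by (subst scaled, subst (2) unscaled, rule det_row_mul)
qed

lemma hodge4_pole:
  "hodge4 (vector [0, 0, 0, 0, s]) A $ 1 $ 2 = s * (A$3$4 - A$4$3) / 2"
  "hodge4 (vector [0, 0, 0, 0, s]) A $ 1 $ 3 = s * (A$4$2 - A$2$4) / 2"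
  "hodge4 (vector [0, 0, 0, 0, s]) A $ 1 $ 4 = s * (A$2$3 - A$3$2) / 2"
proof -
  have pole: "(vector [0, 0, 0, 0, s] :: real^5) = s *s axis 5 1"
    by (simp add: vec_eq_iff forall_5 axis_def)
  show "hodge4 (vector [0, 0, 0, 0, s]) A $ 1 $ 2 = s * (A$3$4 - A$4$3) / 2"
    "hodge4 (vector [0, 0, 0, 0, s]) A $ 1 $ 3 = s * (A$4$2 - A$2$4) / 2"
    "hodge4 (vector [0, 0, 0, 0, s]) A $ 1 $ 4 = s * (A$2$3 - A$3$2) / 2"
    unfolding hodge4_def pole det_scale_last_row
    by (simp_all add: sum_5 det_axes_eq_0 det_axes_id det_axes_values algebra_simps)
qed

text \<open>The 2-forms in the fibers over \<open>e\<^sub>5\<close> and \<open>-e\<^sub>5\<close>, parametrized by their first row.\<close>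
definition north_form :: "real^3 \<Rightarrow> real^5^5" where
  "north_form c = vector [vector [0, c$1, c$2, c$3, 0], vector [-c$1, 0, -c$3, c$2, 0],
     vector [-c$2, c$3, 0, -c$1, 0], vector [-c$3, -c$2, c$1, 0, 0], vector [0, 0, 0, 0, 0]]"

definition south_form :: "real^3 \<Rightarrow> real^5^5" where
  "south_form c = vector [vector [0, c$1, c$2, c$3, 0], vector [-c$1, 0, c$3, -c$2, 0],
     vector [-c$2, -c$3, 0, c$1, 0], vector [-c$3, c$2, -c$1, 0, 0], vector [0, 0, 0, 0, 0]]"

lemma ASD_bundle_pole_entries:
  assumes "(vector [0, 0, 0, 0, s], A) \<in> ASD_bundle" "s \<noteq> 0"
  shows "A$i$i = 0" "A$i$5 = 0" "A$5$i = 0"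
    "A$2$1 = - A$1$2" "A$3$1 = - A$1$3" "A$4$1 = - A$1$4"
    "A$3$2 = - A$2$3" "A$4$2 = - A$2$4" "A$4$3 = - A$3$4"
    "s * A$3$4 = - A$1$2" "s * A$2$4 = A$1$3" "s * A$2$3 = - A$1$4"
proof -
  have skew: "transpose A = - A" and kernel: "A *v vector [0, 0, 0, 0, s] = 0"
    and hodge: "hodge4 (vector [0, 0, 0, 0, s]) A = - A"
    using assms(1) by (auto simp: ASD_bundle_def)
  have skew_entry: "A$j$i = - A$i$j" for i j
    using arg_cong[OF skew, of "\<lambda>M. M$i$j"] by (simp add: transpose_def)
  show col5: "A$i$5 = 0" for i
    using arg_cong[OF kernel, of "\<lambda>v. v$i"] assms(2) by (simp add: matrix_vector_mult_def sum_5)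
  show "A$i$i = 0" "A$5$i = 0"
    using skew_entry[of i i] skew_entry[of 5 i] col5[of i] by simp_all
  show "A$2$1 = - A$1$2" "A$3$1 = - A$1$3" "A$4$1 = - A$1$4"
    "A$3$2 = - A$2$3" "A$4$2 = - A$2$4" "A$4$3 = - A$3$4"
    by (rule skew_entry)+
  then show "s * A$3$4 = - A$1$2" "s * A$2$4 = A$1$3" "s * A$2$3 = - A$1$4"
    using arg_cong[OF hodge, of "\<lambda>M. M$1$2"] arg_cong[OF hodge, of "\<lambda>M. M$1$3"]
      arg_cong[OF hodge, of "\<lambda>M. M$1$4"] by (simp_all add: hodge4_pole)
qed

lemma ASD_bundle_north:
  assumes "(vector [0, 0, 0, 0, 1], A) \<in> ASD_bundle"
  shows "A = north_form (vector [A$1$2, A$1$3, A$1$4])"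
  using ASD_bundle_pole_entries[OF assms] by (simp add: north_form_def vec_eq_iff forall_5)

lemma ASD_bundle_south:
  assumes "(vector [0, 0, 0, 0, -1], A) \<in> ASD_bundle"
  shows "A = south_form (vector [A$1$2, A$1$3, A$1$4])"
  using ASD_bundle_pole_entries[OF assms] by (simp add: south_form_def vec_eq_iff forall_5)


section \<open>Unit quaternions act transitively on the 2-sphere\<close>

definition quat_mult :: "real^4 \<Rightarrow> real^4 \<Rightarrow> real^4" where
  "quat_mult u p = vector [u$1*p$1 - u$2*p$2 - u$3*p$3 - u$4*p$4, u$2*p$1 + u$1*p$2 + u$4*p$3 - u$3*p$4,
     u$3*p$1 - u$4*p$2 + u$1*p$3 + u$2*p$4, u$4*p$1 + u$3*p$2 - u$2*p$3 + u$1*p$4]"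

definition quat_cnj :: "real^4 \<Rightarrow> real^4" where
  "quat_cnj w = vector [w$1, -w$2, -w$3, -w$4]"

text \<open>The rotation by which conjugation with \<open>quat_matrix q\<close> acts on \<open>north_form\<close>; for
  non-unit \<open>q\<close> it is scaled by \<open>|q|\<^sup>2\<close>.\<close>
definition quat_rotate :: "real^4 \<Rightarrow> real^3 \<Rightarrow> real^3" where
  "quat_rotate q c = (let a1 = q$1; a2 = q$2; b1 = q$3; b2 = q$4 in
    vector [(a1\<^sup>2 + a2\<^sup>2 - b1\<^sup>2 - b2\<^sup>2) * c$1 + 2*(a1*b2 + a2*b1) * c$2 + 2*(a2*b2 - a1*b1) * c$3,
            2*(a2*b1 - a1*b2) * c$1 + (a1\<^sup>2 - a2\<^sup>2 + b1\<^sup>2 - b2\<^sup>2) * c$2 + 2*(a1*a2 + b1*b2) * c$3,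
            2*(a1*b1 + a2*b2) * c$1 + 2*(b1*b2 - a1*a2) * c$2 + (a1\<^sup>2 - a2\<^sup>2 - b1\<^sup>2 + b2\<^sup>2) * c$3])"

lemma quat_rotate_quat_mult: "quat_rotate (quat_mult u p) c = quat_rotate u (quat_rotate p c)"
  apply (simp add: vec_eq_iff forall_3 quat_rotate_def quat_mult_def Let_def)
  apply (intro conjI; algebra)
  done

lemma quat_rotate_quat_cnj:
  "quat_rotate (quat_cnj w) (quat_rotate w c) = (((w$1)\<^sup>2 + (w$2)\<^sup>2 + (w$3)\<^sup>2 + (w$4)\<^sup>2)\<^sup>2) *\<^sub>R c"
  apply (simp add: vec_eq_iff forall_3 quat_rotate_def quat_cnj_def Let_def)
  apply (intro conjI; algebra)
  done

lemma quat_rotate_scaleR: "quat_rotate q (a *\<^sub>R c) = a *\<^sub>R quat_rotate q c"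
  by (simp add: vec_eq_iff forall_3 quat_rotate_def Let_def algebra_simps)

lemma norm_quat_mult:
  assumes "norm u = 1" "norm p = 1"
  shows "norm (quat_mult u p) = 1"
proof -
  have "(quat_mult u p $ 1)\<^sup>2 + (quat_mult u p $ 2)\<^sup>2 + (quat_mult u p $ 3)\<^sup>2 + (quat_mult u p $ 4)\<^sup>2
      = ((u$1)\<^sup>2 + (u$2)\<^sup>2 + (u$3)\<^sup>2 + (u$4)\<^sup>2) * ((p$1)\<^sup>2 + (p$2)\<^sup>2 + (p$3)\<^sup>2 + (p$4)\<^sup>2)"
    by (simp add: quat_mult_def) algebra
  then show ?thesis using assms unfolding norm_vec4_eq_1 by simp
qed

lemma norm_quat_cnj: "norm (quat_cnj w) = norm w"
  by (simp add: norm_vec_def L2_set_def sum_4 quat_cnj_def)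

lemma norm_quat_rotate:
  assumes "norm q = 1" "norm c = 1"
  shows "norm (quat_rotate q c) = 1"
proof -
  have "(quat_rotate q c $ 1)\<^sup>2 + (quat_rotate q c $ 2)\<^sup>2 + (quat_rotate q c $ 3)\<^sup>2
      = ((q$1)\<^sup>2 + (q$2)\<^sup>2 + (q$3)\<^sup>2 + (q$4)\<^sup>2)\<^sup>2 * ((c$1)\<^sup>2 + (c$2)\<^sup>2 + (c$3)\<^sup>2)"
    by (simp add: quat_rotate_def Let_def) algebra
  then show ?thesis using assms unfolding norm_vec4_eq_1 norm_vec3_eq_1 by simp
qed

text \<open>Half-angle formula for a unit quaternion whose rotation takes the first axis to the unit
  vector \<open>c\<close>; the antipode \<open>-e\<^sub>1\<close> needs a separate choice.\<close>
definition quat_to :: "real^3 \<Rightarrow> real^4" where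
  "quat_to c = (if c$1 = -1 then vector [0, 0, 1, 0] else
     (let a = sqrt ((1 + c$1) / 2) in vector [a, 0, c$3 / (2*a), - c$2 / (2*a)]))"

lemma quat_to:
  assumes "norm c = 1"
  shows "norm (quat_to c) = 1" "quat_rotate (quat_to c) (vector [1, 0, 0]) = c"
proof -
  have c: "(c$1)\<^sup>2 + (c$2)\<^sup>2 + (c$3)\<^sup>2 = 1" using assms norm_vec3_eq_1 by blast
  have "norm (quat_to c) = 1 \<and> quat_rotate (quat_to c) (vector [1, 0, 0]) = c"
  proof (cases "c$1 = -1")
    case True
    then have "c$2 = 0" "c$3 = 0" using c by (simp_all add: sum_power2_eq_zero_iff)
    then show ?thesis
      using True by (simp add: norm_vec4_eq_1 quat_to_def quat_rotate_def Let_def vec_eq_iff forall_3)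
  next
    case False
    have "(c$1)\<^sup>2 \<le> 1" using c zero_le_power2[of "c$2"] zero_le_power2[of "c$3"] by linarith
    then have "1 + c$1 > 0" using False abs_square_le_1 by force
    define a where "a = sqrt ((1 + c$1) / 2)"
    have a: "a > 0" "a\<^sup>2 = (1 + c$1) / 2" using \<open>1 + c$1 > 0\<close> by (simp_all add: a_def)
    have q: "quat_to c = vector [a, 0, c$3 / (2*a), - c$2 / (2*a)]"
      using False by (simp add: quat_to_def a_def Let_def)
    have c23: "(c$2)\<^sup>2 + (c$3)\<^sup>2 = (1 - c$1) * (1 + c$1)"
      using c by (simp add: algebra_simps power2_eq_square)
    have "a\<^sup>2 + (c$3 / (2*a))\<^sup>2 + (- c$2 / (2*a))\<^sup>2 = a\<^sup>2 + ((c$2)\<^sup>2 + (c$3)\<^sup>2) / (4 * a\<^sup>2)"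
      by (simp add: power_divide power_mult_distrib add_divide_distrib)
    also have "\<dots> = 1" unfolding c23 a(2) using \<open>1 + c$1 > 0\<close> by (simp add: field_simps)
    finally have norm_q: "norm (quat_to c) = 1" by (simp add: q norm_vec4_eq_1)
    have "a\<^sup>2 - (c$3 / (2*a))\<^sup>2 - (- c$2 / (2*a))\<^sup>2 = a\<^sup>2 - ((c$2)\<^sup>2 + (c$3)\<^sup>2) / (4 * a\<^sup>2)"
      by (simp add: power_divide power_mult_distrib diff_divide_distrib add_divide_distrib)
    also have "\<dots> = c$1" unfolding c23 a(2) using \<open>1 + c$1 > 0\<close> by (simp add: field_simps)
    finally have "quat_rotate (quat_to c) (vector [1, 0, 0]) = c"
      using a(1) by (simp add: q quat_rotate_def Let_def vec_eq_iff forall_3)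
    with norm_q show ?thesis ..
  qed
  then show "norm (quat_to c) = 1" "quat_rotate (quat_to c) (vector [1, 0, 0]) = c" by auto
qed

lemma quat_rotate_image_sphere:
  assumes "norm c0 = 1"
  shows "(\<lambda>q. quat_rotate q c0) ` sphere 0 1 = sphere 0 1"
proof
  show "(\<lambda>q. quat_rotate q c0) ` sphere 0 1 \<subseteq> sphere 0 1"
    using norm_quat_rotate assms by auto
  show "sphere 0 1 \<subseteq> (\<lambda>q. quat_rotate q c0) ` sphere 0 1"
  proof
    fix c :: "real^3" assume "c \<in> sphere 0 1"
    then have c: "norm c = 1" by simp
    define w where "w = quat_to c0"
    have w: "norm w = 1" "quat_rotate w (vector [1, 0, 0]) = c0"
      using quat_to[OF assms] by (simp_all add: w_def)
    then have w_sq: "(w$1)\<^sup>2 + (w$2)\<^sup>2 + (w$3)\<^sup>2 + (w$4)\<^sup>2 = 1"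
      by (simp add: norm_vec4_eq_1)
    define q where "q = quat_mult (quat_to c) (quat_cnj w)"
    have "norm q = 1"
      unfolding q_def using quat_to(1)[OF c] w(1) by (simp add: norm_quat_mult norm_quat_cnj)
    moreover have "quat_rotate q c0 = c"
      using quat_to(2)[OF c] by (simp add: q_def quat_rotate_quat_mult quat_rotate_quat_cnj w_sq flip: w(2))
    ultimately show "c \<in> (\<lambda>q. quat_rotate q c0) ` sphere 0 1" by force
  qed
qed

lemma quat_matrix_pole: "quat_matrix q *v vector [0, 0, 0, 0, s] = vector [0, 0, 0, 0, s]"
  by (simp add: vec_eq_iff forall_5 matrix_vector_mult_def sum_5 quat_matrix_def)

lemma quat_matrix_conj_north_form:
  "quat_matrix q ** north_form c ** transpose (quat_matrix q) = north_form (quat_rotate q c)"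
  apply (simp add: vec_eq_iff forall_5 matrix_matrix_mult_def transpose_def sum_5 quat_matrix_def
      north_form_def quat_rotate_def Let_def)
  apply (intro conjI; algebra)
  done

lemma quat_matrix_conj_south_form:
  "quat_matrix q ** south_form c ** transpose (quat_matrix q)
    = south_form (((q$1)\<^sup>2 + (q$2)\<^sup>2 + (q$3)\<^sup>2 + (q$4)\<^sup>2) *\<^sub>R c)"
  apply (simp add: vec_eq_iff forall_5 matrix_matrix_mult_def transpose_def sum_5 quat_matrix_def
      south_form_def)
  apply (intro conjI; algebra)
  done

lemma linear_north_form: "linear north_form"
  by (rule linearI) (simp_all add: vec_eq_iff forall_5 north_form_def)

lemma su2_orbit_fixed_point:
  assumes "\<And>q. norm q = 1 \<Longrightarrow> bundle_act (quat_matrix q) p = p"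
  shows "su2_orbit p = {p}"
proof -
  have "(vector [1, 0, 0, 0] :: real^4) \<in> sphere 0 1" by (simp add: norm_vec4_eq_1)
  then show ?thesis unfolding su2_orbit_eq_image_sphere using assms by force
qed

lemma diffeomorphic_singleton: "diffeomorphic {p} {0::real}"
  using diffeomorphic_image_quadratic_map[OF quadratic_map_const quadratic_map_const, of "{0::real}" 0 p]
  by simp

lemma su2_orbit_north_diffeomorphic_S2:
  assumes "(vector [0, 0, 0, 0, 1], A) \<in> ASD_bundle" "A \<noteq> 0"
  shows "diffeomorphic (su2_orbit (vector [0, 0, 0, 0, 1], A)) (sphere (0::real^3) 1)"
proof -
  define v where "v = (vector [A$1$2, A$1$3, A$1$4] :: real^3)"
  have A: "A = north_form v" using ASD_bundle_north[OF assms(1)] by (simp add: v_def)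
  then have "v \<noteq> 0" using assms(2) linear_0[OF linear_north_form] by auto
  define r where "r = norm v"
  have "r > 0" using \<open>v \<noteq> 0\<close> by (simp add: r_def)
  define c0 where "c0 = (1 / r) *\<^sub>R v"
  have c0: "norm c0 = 1" "v = r *\<^sub>R c0" using \<open>r > 0\<close> by (simp_all add: c0_def r_def)
  define g where "g c = (vector [0, 0, 0, 0, 1] :: real^5, north_form (r *\<^sub>R c))" for c
  define f where "f p = (1 / r) *\<^sub>R (vector [snd p $1$2, snd p $1$3, snd p $1$4] :: real^3)"
    for p :: "(real^5) \<times> (real^5^5)"
  have "linear f"
    unfolding f_def by (rule linearI) (simp_all add: vec_eq_iff forall_3 algebra_simps add_divide_distrib)
  moreover have "linear (\<lambda>c. north_form (r *\<^sub>R c))"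
    using linear_compose[OF linear_scale_self[of r] linear_north_form] by (simp add: o_def)
  then have "quadratic_map g"
    unfolding g_def by (intro quadratic_map_Pair quadratic_map_const quadratic_map_linear)
  moreover have "\<forall>c\<in>sphere 0 1. f (g c) = c"
    using \<open>r > 0\<close> by (simp add: f_def g_def north_form_def vec_eq_iff forall_3)
  moreover have "su2_orbit (vector [0, 0, 0, 0, 1], A) = g ` sphere 0 1"
  proof -
    have "bundle_act (quat_matrix q) (vector [0, 0, 0, 0, 1], A) = g (quat_rotate q c0)" for q
      by (simp add: bundle_act_def g_def A c0(2) quat_matrix_pole quat_matrix_conj_north_form
          quat_rotate_scaleR)
    then show ?thesis
      unfolding su2_orbit_eq_image_sphere quat_rotate_image_sphere[OF c0(1), symmetric]
      by (simp add: image_image)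
  qed
  ultimately show ?thesis
    using diffeomorphic_image_quadratic_map quadratic_map_linear by metis
qed

lemma su2_orbit_south:
  assumes "(vector [0, 0, 0, 0, -1], A) \<in> ASD_bundle"
  shows "su2_orbit (vector [0, 0, 0, 0, -1], A) = {(vector [0, 0, 0, 0, -1], A)}"
proof (rule su2_orbit_fixed_point)
  define v where "v = (vector [A$1$2, A$1$3, A$1$4] :: real^3)"
  have A: "A = south_form v" using ASD_bundle_south[OF assms] by (simp add: v_def)
  fix q :: "real^4" assume "norm q = 1"
  then show "bundle_act (quat_matrix q) (vector [0, 0, 0, 0, -1], A) = (vector [0, 0, 0, 0, -1], A)"
    by (simp add: A norm_vec4_eq_1 bundle_act_def quat_matrix_pole quat_matrix_conj_south_form)
qed

lemma su2_orbit_north_zero: "su2_orbit (vector [0, 0, 0, 0, 1], 0) = {(vector [0, 0, 0, 0, 1], 0)}"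
  by (rule su2_orbit_fixed_point) (simp add: bundle_act_def quat_matrix_pole)

theorem lemma4p6:
  shows "(\<forall>p\<in>ASD_bundle. \<exists>U\<in>SU2. \<exists>x1 x5. x1 \<ge> 0 \<and>
            fst (bundle_act (su2_mat U) p) = (vector [x1, 0, 0, 0, x5] :: real^5)) \<and>
         (\<forall>x1 x5 A. (vector [x1, 0, 0, 0, x5], A) \<in> ASD_bundle \<longrightarrow> x1 \<ge> 0 \<longrightarrow>
            (x5 \<noteq> 1 \<and> x5 \<noteq> -1 \<longrightarrow>
              diffeomorphic (su2_orbit (vector [x1, 0, 0, 0, x5], A)) (sphere (0::real^4) 1)) \<and>
            (x5 = 1 \<and> A \<noteq> 0 \<longrightarrow>
              diffeomorphic (su2_orbit (vector [x1, 0, 0, 0, x5], A)) (sphere (0::real^3) 1)) \<and>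
            ((x5 = 1 \<and> A = 0) \<or> x5 = -1 \<longrightarrow>
              diffeomorphic (su2_orbit (vector [x1, 0, 0, 0, x5], A)) {0::real}))"
proof (intro conjI ballI allI impI)
  fix p :: "(real^5) \<times> (real^5^5)"
  show "\<exists>U\<in>SU2. \<exists>x1 x5. x1 \<ge> 0 \<and> fst (bundle_act (su2_mat U) p) = vector [x1, 0, 0, 0, x5]"
    using su2_normal_form[of "fst p"] by (simp add: bundle_act_def)
next
  fix x1 x5 :: real and A :: "real^5^5"
  assume A: "(vector [x1, 0, 0, 0, x5], A) \<in> ASD_bundle" and "x1 \<ge> 0"
  then have "x1\<^sup>2 + x5\<^sup>2 = 1"
    by (simp add: ASD_bundle_def norm_eq_1 inner_vec_def sum_5 power2_eq_square)
  then have pole: "x1 = 0" if "x5 = 1 \<or> x5 = -1"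
    using that by auto
  show "diffeomorphic (su2_orbit (vector [x1, 0, 0, 0, x5], A)) (sphere (0::real^4) 1)"
    if "x5 \<noteq> 1 \<and> x5 \<noteq> -1"
    using that \<open>x1\<^sup>2 + x5\<^sup>2 = 1\<close> \<open>x1 \<ge> 0\<close> su2_orbit_diffeomorphic_S3
    by (cases "x1 = 0") (auto simp: power2_eq_1_iff)
  show "diffeomorphic (su2_orbit (vector [x1, 0, 0, 0, x5], A)) (sphere (0::real^3) 1)"
    if "x5 = 1 \<and> A \<noteq> 0"
    using that A pole su2_orbit_north_diffeomorphic_S2 by simp
  show "diffeomorphic (su2_orbit (vector [x1, 0, 0, 0, x5], A)) {0::real}"
    if "(x5 = 1 \<and> A = 0) \<or> x5 = -1"
    using that A pole su2_orbit_south su2_orbit_north_zero diffeomorphic_singleton by auto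
qed

end
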